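(* Let $(G,\Omega)$ be an ample transitive $\ell$-permutation group whose root system $T$ has no minimal element. Let $\Delta\in T$ and $h\in Q_\Delta$. (a) Let $\Delta'\in T$ with $\Delta'\subsetneq\Delta$ and $\Delta'h\neq\Delta'$, and let $1\neq g\in\mathrm{rst}(\Delta')$. Then (i) $[h^{-1},h^g]\neq1$ (in particular $X_h\neq\{1\}$); and (ii) if $f\in G$ and $[[h^{-1},h^g],f]=1$ then $\Delta'f=\Delta'$; in particular every $f$ in the centralizer $\mathrm C_G(X_h)$ satisfies $\Delta'f=\Delta'$. (b) If $\beta\in\mathrm{supp}(h)$ and $f\in G$, then either $\beta f=\beta$ or $[[h^{-1},h^g],f]\neq1$ for some $g\in\mathrm{rst}(\Delta)$.
   Context: An $\ell$-permutation group $(G,\Omega)$: a totally ordered set $\Omega$ with a subgroup $G$ of $\mathrm{Aut}(\Omega,\leqslant)$ (right action) closed under pointwise max and min; transitive if $G$ is transitive on $\Omega$. $\mathrm{supp}(g)=\{\alpha:\alpha g\neq\alpha\}$, $g^f=f^{-1}gf$, $[a,b]=a^{-1}b^{-1}ab$. A convex congruence is a $G$-invariant equivalence relation with convex classes; these are totally ordered by inclusion. For $\alpha\neq\beta$, $V(\alpha,\beta)$ is the intersection of all convex congruences in which $\alpha,\beta$ lie in the same class. $T$ is the set of all classes of the congruences $V(\alpha,\beta)$ ($\alpha\ne\beta$), partially ordered by inclusion; for $\Delta\in T$, $\kappa(\Delta)$ is the congruence $V(\alpha,\beta)$ having $\Delta$ as a class. $\mathrm{rst}(\Delta)=\{g:\mathrm{supp}(g)\subseteq\Delta\}$.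 $Q_\Delta=\{h\in\mathrm{rst}(\Delta):\exists\alpha\in\Delta,\ V(\alpha,\alpha h)=\kappa(\Delta)\}$; $(G,\Omega)$ is ample if $Q_\Delta\neq\emptyset$ for all $\Delta\in T$. For $h\in Q_\Delta$, $X_h=\{[h^{-1},h^g]:g\in G\}$. *)

theory Defs
  imports Main
begin

text \<open>Omega is modelled as the whole of a linearly ordered type 'a.
  Permutations act on the right: alpha g is written g alpha, so the group product
  g h (first g, then h) is the function h o g.\<close>

definition order_aut :: "('a::linorder \<Rightarrow> 'a) \<Rightarrow> bool" where
  "order_aut f \<longleftrightarrow> bij f \<and> strict_mono f"

definition gm :: "('a \<Rightarrow> 'a) \<Rightarrow> ('a \<Rightarrow> 'a) \<Rightarrow> ('a \<Rightarrow> 'a)" where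
  "gm g h = h \<circ> g"

definition ginv :: "('a \<Rightarrow> 'a) \<Rightarrow> ('a \<Rightarrow> 'a)" where
  "ginv g = inv g"

definition gconj :: "('a \<Rightarrow> 'a) \<Rightarrow> ('a \<Rightarrow> 'a) \<Rightarrow> ('a \<Rightarrow> 'a)" where
  "gconj g f = gm (gm (ginv f) g) f"

definition gcomm :: "('a \<Rightarrow> 'a) \<Rightarrow> ('a \<Rightarrow> 'a) \<Rightarrow> ('a \<Rightarrow> 'a)" where
  "gcomm a b = gm (gm (gm (ginv a) (ginv b)) a) b"

definition l_perm_group :: "('a::linorder \<Rightarrow> 'a) set \<Rightarrow> bool" where
  "l_perm_group G \<longleftrightarrow>
     (\<forall>g\<in>G. order_aut g) \<and> id \<in> G \<and>
     (\<forall>f\<in>G. \<forall>g\<in>G. gm f g \<in> G) \<and> (\<forall>g\<in>G. ginv g \<in> G) \<and>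
     (\<forall>f\<in>G. \<forall>g\<in>G. (\<lambda>x. max (f x) (g x)) \<in> G \<and> (\<lambda>x. min (f x) (g x)) \<in> G)"

definition transitive_grp :: "('a \<Rightarrow> 'a) set \<Rightarrow> bool" where
  "transitive_grp G \<longleftrightarrow> (\<forall>\<alpha> \<beta>. \<exists>g\<in>G. g \<alpha> = \<beta>)"

definition supp :: "('a \<Rightarrow> 'a) \<Rightarrow> 'a set" where
  "supp g = {\<alpha>. g \<alpha> \<noteq> \<alpha>}"

definition convex_congruence :: "('a::linorder \<Rightarrow> 'a) set \<Rightarrow> ('a \<times> 'a) set \<Rightarrow> bool" where
  "convex_congruence G E \<longleftrightarrow> equiv UNIV E \<and>
     (\<forall>g\<in>G. \<forall>\<alpha> \<beta>. (\<alpha>, \<beta>) \<in> E \<longrightarrow> (g \<alpha>, g \<beta>) \<in> E) \<and>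
     (\<forall>\<alpha> \<beta> \<gamma>. (\<alpha>, \<beta>) \<in> E \<and> \<alpha> \<le> \<gamma> \<and> \<gamma> \<le> \<beta> \<longrightarrow> (\<alpha>, \<gamma>) \<in> E)"

definition V :: "('a::linorder \<Rightarrow> 'a) set \<Rightarrow> 'a \<Rightarrow> 'a \<Rightarrow> ('a \<times> 'a) set" where
  "V G \<alpha> \<beta> = \<Inter> {E. convex_congruence G E \<and> (\<alpha>, \<beta>) \<in> E}"

definition roots :: "('a::linorder \<Rightarrow> 'a) set \<Rightarrow> 'a set set" where
  "roots G = {\<Delta>. \<exists>\<alpha> \<beta>. \<alpha> \<noteq> \<beta> \<and> \<Delta> \<in> UNIV // V G \<alpha> \<beta>}"

definition kappa :: "('a::linorder \<Rightarrow> 'a) set \<Rightarrow> 'a set \<Rightarrow> ('a \<times> 'a) set" where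
  "kappa G \<Delta> = (THE E. \<exists>\<alpha> \<beta>. \<alpha> \<noteq> \<beta> \<and> E = V G \<alpha> \<beta> \<and> \<Delta> \<in> UNIV // E)"

definition rst :: "('a \<Rightarrow> 'a) set \<Rightarrow> 'a set \<Rightarrow> ('a \<Rightarrow> 'a) set" where
  "rst G \<Delta> = {g\<in>G. supp g \<subseteq> \<Delta>}"

definition Q :: "('a::linorder \<Rightarrow> 'a) set \<Rightarrow> 'a set \<Rightarrow> ('a \<Rightarrow> 'a) set" where
  "Q G \<Delta> = {h\<in>rst G \<Delta>. \<exists>\<alpha>\<in>\<Delta>. V G \<alpha> (h \<alpha>) = kappa G \<Delta>}"

definition ample :: "('a::linorder \<Rightarrow> 'a) set \<Rightarrow> bool" where
  "ample G \<longleftrightarrow> (\<forall>\<Delta>\<in>roots G. Q G \<Delta> \<noteq> {})"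

definition X :: "('a \<Rightarrow> 'a) set \<Rightarrow> ('a \<Rightarrow> 'a) \<Rightarrow> ('a \<Rightarrow> 'a) set" where
  "X G h = {gcomm (ginv h) (gconj h g) | g. g \<in> G}"

definition centralizer :: "('a \<Rightarrow> 'a) set \<Rightarrow> ('a \<Rightarrow> 'a) set \<Rightarrow> ('a \<Rightarrow> 'a) set" where
  "centralizer G S = {f\<in>G. \<forall>x\<in>S. gm x f = gm f x}"

end

theory Submission
  imports Defs
begin

text \<open>Let \<open>D\<close> be a class of a convex congruence moved by \<open>h\<close>, and let \<open>1 \<noteq> g\<close> be supported
  in \<open>D\<close>. Since \<open>h\<close> preserves the order of the classes, \<open>Dh\<^sup>-\<^sup>1\<close>, \<open>D\<close>, \<open>Dh\<close> are three
  distinct classes, monotonically arranged. A direct computation shows that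
  \<open>c = [h\<^sup>-\<^sup>1, h\<^sup>g]\<close> acts as \<open>g\<^sup>2\<close> on \<open>D\<close>, moves a point of each of the two neighbouring
  classes and fixes everything outside the three classes. Any \<open>f\<close> commuting with \<open>c\<close>
  permutes the support of \<open>c\<close> and preserves the order of classes, so it must map the
  middle class \<open>D\<close> onto itself. For (b), the absence of minimal roots gives a root
  \<open>D \<subseteq> \<Delta>\<close> containing \<open>\<beta>\<close> but neither \<open>\<beta>h\<close> nor \<open>\<beta>f\<close>, and ampleness a nontrivial
  \<open>g\<close> supported in it; then \<open>f\<close> cannot commute with \<open>c\<close>.\<close>

lemma l_perm_group_bij: "l_perm_group G \<Longrightarrow> g \<in> G \<Longrightarrow> bij g"
  by (simp add: l_perm_group_def order_aut_def)

lemma l_perm_group_strict_mono: "l_perm_group G \<Longrightarrow> g \<in> G \<Longrightarrow> strict_mono g"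
  by (simp add: l_perm_group_def order_aut_def)

lemma l_perm_group_gm_closed: "l_perm_group G \<Longrightarrow> f \<in> G \<Longrightarrow> g \<in> G \<Longrightarrow> gm f g \<in> G"
  by (simp add: l_perm_group_def)

lemma l_perm_group_ginv_closed: "l_perm_group G \<Longrightarrow> g \<in> G \<Longrightarrow> ginv g \<in> G"
  by (simp add: l_perm_group_def)

lemma l_perm_group_inv_closed: "l_perm_group G \<Longrightarrow> g \<in> G \<Longrightarrow> inv g \<in> G"
  using l_perm_group_ginv_closed by (simp add: ginv_def)

lemma gcomm_ginv_gconj_closed:
  "l_perm_group G \<Longrightarrow> h \<in> G \<Longrightarrow> g \<in> G \<Longrightarrow> gcomm (ginv h) (gconj h g) \<in> G"
  unfolding gcomm_def gconj_def by (simp add: l_perm_group_gm_closed l_perm_group_ginv_closed)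

lemma gcomm_ginv_gconj_apply:
  assumes "bij h" "bij g"
  shows "gcomm (ginv h) (gconj h g) x = g (h (inv g (inv h (g (inv h (inv g (h x)))))))"
proof -
  have "inv (g \<circ> h \<circ> inv g) = g \<circ> inv h \<circ> inv g"
    using assms by (intro inv_equality) (simp_all add: bij_is_inj bij_is_surj surj_f_inv_f)
  moreover have "inv (inv h) = h"
    using assms by (simp add: inv_inv_eq)
  ultimately show ?thesis
    by (simp add: gcomm_def gconj_def gm_def ginv_def comp_assoc)
qed

lemma gcomm_eq_id_imp_commute:
  assumes "bij c" "bij f" "gcomm c f = id"
  shows "f \<circ> c = c \<circ> f"
proof
  fix x
  have "gcomm c f (c (f x)) = c (f x)" using assms(3) by simp
  then show "(f \<circ> c) x = (c \<circ> f) x"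
    using assms(1,2) by (simp add: gcomm_def gm_def ginv_def bij_is_inj)
qed

lemma supp_commuting_closed:
  assumes "inj f" "f \<circ> c = c \<circ> f" "x \<in> supp c"
  shows "f x \<in> supp c"
proof -
  have "f (c x) \<noteq> f x" using assms(1,3) by (auto simp: supp_def dest: injD)
  moreover have "c (f x) = f (c x)" using assms(2) by (metis comp_apply)
  ultimately show ?thesis by (simp add: supp_def)
qed

lemma strict_mono_twice_fixed:
  fixes g :: "'a::linorder \<Rightarrow> 'a"
  assumes "strict_mono g" "g (g x) = x"
  shows "g x = x"
proof (rule ccontr)
  assume "g x \<noteq> x"
  then consider "x < g x" | "g x < x" by (meson linorder_neqE)
  then show False
  proof cases
    case 1
    then have "g x < g (g x)" using assms(1) strict_monoD by blast
    then show False using 1 assms(2) by simp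
  next
    case 2
    then have "g (g x) < g x" using assms(1) strict_monoD by blast
    then show False using 2 assms(2) by simp
  qed
qed

section \<open>Convex congruences\<close>

lemma convex_congruence_refl: "convex_congruence G E \<Longrightarrow> (x, x) \<in> E"
  by (simp add: convex_congruence_def equiv_def refl_on_def)

lemma convex_congruence_sym: "convex_congruence G E \<Longrightarrow> (x, y) \<in> E \<Longrightarrow> (y, x) \<in> E"
  by (meson convex_congruence_def equiv_def symD)

lemma convex_congruence_trans:
  "convex_congruence G E \<Longrightarrow> (x, y) \<in> E \<Longrightarrow> (y, z) \<in> E \<Longrightarrow> (x, z) \<in> E"
  by (meson convex_congruence_def equiv_def transD)

lemma convex_congruence_convex:
  "convex_congruence G E \<Longrightarrow> (x, y) \<in> E \<Longrightarrow> x \<le> z \<Longrightarrow> z \<le> y \<Longrightarrow> (x, z) \<in> E"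
  by (simp add: convex_congruence_def)

lemma convex_congruence_apply:
  "convex_congruence G E \<Longrightarrow> g \<in> G \<Longrightarrow> (x, y) \<in> E \<Longrightarrow> (g x, g y) \<in> E"
  by (simp add: convex_congruence_def)

lemma convex_congruence_apply_iff:
  assumes "l_perm_group G" "convex_congruence G E" "g \<in> G"
  shows "(g x, g y) \<in> E \<longleftrightarrow> (x, y) \<in> E"
proof
  assume "(g x, g y) \<in> E"
  then have "(inv g (g x), inv g (g y)) \<in> E"
    using assms by (simp add: convex_congruence_apply l_perm_group_inv_closed)
  then show "(x, y) \<in> E"
    using assms by (simp add: l_perm_group_bij bij_is_inj)
qed (use assms convex_congruence_apply in blast)

lemma convex_congruence_class_eq:
  "convex_congruence G E \<Longrightarrow> (x, y) \<in> E \<Longrightarrow> E``{x} = E``{y}"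
  by (meson convex_congruence_def equiv_class_eq)

lemma convex_congruence_image_class:
  assumes "l_perm_group G" "convex_congruence G E" "g \<in> G"
  shows "g ` (E``{x}) = E``{g x}"
proof
  show "g ` (E``{x}) \<subseteq> E``{g x}"
    using assms convex_congruence_apply by fastforce
  show "E``{g x} \<subseteq> g ` (E``{x})"
  proof
    fix y assume "y \<in> E``{g x}"
    moreover have "y = g (inv g y)"
      using assms by (simp add: l_perm_group_bij bij_is_surj surj_f_inv_f)
    ultimately show "y \<in> g ` (E``{x})"
      using convex_congruence_apply_iff[OF assms] by (metis Image_singleton_iff imageI)
  qed
qed

lemma convex_congruence_classes_ordered:
  assumes cc: "convex_congruence G E"
    and "x < y" "(x, y) \<notin> E" "(x, x') \<in> E" "(y, y') \<in> E"
  shows "x' < y'"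
proof (rule ccontr)
  assume "\<not> x' < y'"
  then have "y' \<le> x'" by simp
  show False
  proof (cases "y \<le> x'")
    case True
    then show False
      using assms convex_congruence_convex[OF cc \<open>(x, x') \<in> E\<close>] by simp
  next
    case False
    then have "(y', x') \<in> E"
      using \<open>y' \<le> x'\<close> convex_congruence_convex[OF cc convex_congruence_sym[OF cc \<open>(y, y') \<in> E\<close>]]
      by (simp add: convex_congruence_sym[OF cc])
    then show False
      using assms convex_congruence_sym convex_congruence_trans by metis
  qed
qed

lemma convex_congruence_iterate:
  assumes cc: "convex_congruence G E" and mono: "strict_mono h" and "(x, h (h x)) \<in> E"
  shows "(x, h x) \<in> E"
proof -
  consider "x < h x" | "h x = x" | "h x < x" by (meson linorder_neqE)
  then show ?thesis
  proof cases
    case 1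
    then have "h x < h (h x)" using mono strict_monoD by blast
    then show ?thesis using 1 assms(3) convex_congruence_convex[OF cc] by simp
  next
    case 2
    then show ?thesis using convex_congruence_refl[OF cc] by simp
  next
    case 3
    then have "h (h x) < h x" using mono strict_monoD by blast
    then have "(h (h x), h x) \<in> E"
      using 3 convex_congruence_convex[OF cc convex_congruence_sym[OF cc assms(3)]] by simp
    then show ?thesis using assms(3) convex_congruence_trans[OF cc] by blast
  qed
qed

lemma convex_congruence_middle_class_fixed:
  assumes lp: "l_perm_group G" and cc: "convex_congruence G E" and fG: "f \<in> G"
    and "x < y" "y < z" "(x, y) \<notin> E" "(y, z) \<notin> E"
    and img: "\<And>w. w \<in> {x, y, z} \<Longrightarrow> \<exists>v\<in>{x, y, z}. (f w, v) \<in> E"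
  shows "(f y, y) \<in> E"
proof -
  have mono: "f x < f y" "f y < f z"
    using assms l_perm_group_strict_mono strict_monoD by blast+
  have reflect: "\<And>u v. (f u, f v) \<in> E \<Longrightarrow> (u, v) \<in> E"
    using convex_congruence_apply_iff[OF lp cc fG] by blast
  have xz: "(x, z) \<notin> E"
    using assms convex_congruence_convex less_imp_le by metis
  note sym = convex_congruence_sym[OF cc] and trans = convex_congruence_trans[OF cc]
    and ord = convex_congruence_classes_ordered[OF cc]
  have "(f y, x) \<notin> E"
  proof
    assume fyx: "(f y, x) \<in> E"
    obtain v where "v \<in> {x, y, z}" "(f x, v) \<in> E" using img by blast
    moreover have "(f x, x) \<notin> E" using fyx reflect sym trans \<open>(x, y) \<notin> E\<close> by metis
    ultimately show False
      using ord[OF \<open>x < y\<close> \<open>(x, y) \<notin> E\<close>] ord[of x z] \<open>x < y\<close> \<open>y < z\<close> xz fyx mono sym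
      by (metis insert_iff order.asym order.strict_trans singletonD)
  qed
  moreover have "(f y, z) \<notin> E"
  proof
    assume fyz: "(f y, z) \<in> E"
    obtain v where "v \<in> {x, y, z}" "(f z, v) \<in> E" using img by blast
    moreover have "(f z, z) \<notin> E" using fyz reflect sym trans \<open>(y, z) \<notin> E\<close> by metis
    ultimately show False
      using ord[OF \<open>y < z\<close> \<open>(y, z) \<notin> E\<close>] ord[of x z] \<open>x < y\<close> \<open>y < z\<close> xz fyz mono sym
      by (metis insert_iff order.asym order.strict_trans singletonD)
  qed
  ultimately show ?thesis using img by blast
qed

lemma V_convex_congruence: "convex_congruence G (V G p q)"
proof -
  let ?S = "{E. convex_congruence G E \<and> (p, q) \<in> E}"
  have "equiv UNIV (\<Inter>?S)"
    unfolding equiv_def refl_on_def sym_def trans_def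
  proof (intro conjI allI impI ballI)
    show "\<Inter>?S \<subseteq> UNIV \<times> UNIV" by simp
  qed (use convex_congruence_refl convex_congruence_sym convex_congruence_trans in blast)+
  then show ?thesis
    unfolding V_def convex_congruence_def[of G "\<Inter>?S"]
    using convex_congruence_apply convex_congruence_convex by blast
qed

lemma V_mem: "(p, q) \<in> V G p q"
  by (auto simp: V_def)

lemma V_least: "convex_congruence G E \<Longrightarrow> (p, q) \<in> E \<Longrightarrow> V G p q \<subseteq> E"
  by (auto simp: V_def)

lemma convex_congruence_Id: "convex_congruence G Id"
  by (auto simp: convex_congruence_def equiv_def refl_on_def sym_def trans_def)

lemma convex_congruence_subset_if_class_subset:
  assumes lp: "l_perm_group G" and tr: "transitive_grp G"
    and E: "convex_congruence G E" and F: "convex_congruence G F"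
    and sub: "E``{a} \<subseteq> F``{b}"
  shows "E \<subseteq> F"
proof safe
  fix p q assume "(p, q) \<in> E"
  obtain g where g: "g \<in> G" "g a = p" using tr unfolding transitive_grp_def by blast
  have "(g a, g (inv g q)) \<in> E"
    using \<open>(p, q) \<in> E\<close> g lp by (simp add: l_perm_group_bij bij_is_surj surj_f_inv_f)
  then have "(a, inv g q) \<in> F"
    using sub convex_congruence_apply_iff[OF lp E g(1)] convex_congruence_refl[OF E]
      convex_congruence_sym[OF F] convex_congruence_trans[OF F] by blast
  then have "(g a, g (inv g q)) \<in> F" using convex_congruence_apply[OF F g(1)] by blast
  then show "(p, q) \<in> F"
    using g lp by (simp add: l_perm_group_bij bij_is_surj surj_f_inv_f)
qed

section \<open>Roots\<close>

lemma roots_iff: "\<Delta> \<in> roots G \<longleftrightarrow> (\<exists>p q z. p \<noteq> q \<and> \<Delta> = V G p q `` {z})"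
  by (auto simp: roots_def quotient_def)

lemma kappa_eq_V:
  assumes "l_perm_group G" "transitive_grp G" "u \<noteq> v"
  shows "kappa G (V G u v `` {z}) = V G u v"
  unfolding kappa_def
proof (rule the_equality)
  show "\<exists>\<alpha> \<beta>. \<alpha> \<noteq> \<beta> \<and> V G u v = V G \<alpha> \<beta> \<and> V G u v `` {z} \<in> UNIV // V G u v"
    using assms by (auto simp: quotient_def)
next
  fix E assume "\<exists>\<alpha> \<beta>. \<alpha> \<noteq> \<beta> \<and> E = V G \<alpha> \<beta> \<and> V G u v `` {z} \<in> UNIV // E"
  then obtain p q w where "E = V G p q" "V G u v `` {z} = E `` {w}"
    by (auto simp: quotient_def)
  then show "E = V G u v"
    using convex_congruence_subset_if_class_subset[OF assms(1,2) V_convex_congruence V_convex_congruence]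
    by (metis order_refl subset_antisym)
qed

lemma ample_rst_nontrivial:
  assumes lp: "l_perm_group G" and tr: "transitive_grp G" and "ample G" and "u \<noteq> v"
  shows "\<exists>g\<in>rst G (V G u v `` {z}). g \<noteq> id"
proof -
  have "V G u v `` {z} \<in> roots G" using \<open>u \<noteq> v\<close> roots_iff by blast
  then obtain g \<alpha> where g: "g \<in> rst G (V G u v `` {z})" "V G \<alpha> (g \<alpha>) = V G u v"
    using \<open>ample G\<close> kappa_eq_V[OF lp tr \<open>u \<noteq> v\<close>] unfolding ample_def Q_def by fastforce
  have "g \<noteq> id"
  proof
    assume "g = id"
    then have "V G u v \<subseteq> Id" using g(2) V_least convex_congruence_Id by fastforce
    then show False using V_mem \<open>u \<noteq> v\<close> by blast
  qed
  then show ?thesis using g(1) by blast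
qed

lemma no_minimal_root_shrink:
  assumes lp: "l_perm_group G" and tr: "transitive_grp G"
    and nm: "\<forall>\<Gamma>\<in>roots G. \<exists>\<Gamma>'\<in>roots G. \<Gamma>' \<subset> \<Gamma>" and "x \<noteq> y"
  shows "\<exists>u v. u \<noteq> v \<and> V G u v \<subseteq> V G x y \<and> (x, y) \<notin> V G u v"
proof -
  have "V G x y `` {x} \<in> roots G" using \<open>x \<noteq> y\<close> roots_iff by blast
  then obtain u v z where uv: "u \<noteq> v" "V G u v `` {z} \<subset> V G x y `` {x}"
    using nm roots_iff by metis
  have sub: "V G u v \<subseteq> V G x y"
    using convex_congruence_subset_if_class_subset[OF lp tr V_convex_congruence V_convex_congruence] uv
    by blast
  have "(x, y) \<notin> V G u v"
  proof
    assume "(x, y) \<in> V G u v"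
    then have "V G x y = V G u v" using sub V_least V_convex_congruence by blast
    moreover have "(x, z) \<in> V G x y"
      using uv convex_congruence_refl[OF V_convex_congruence] by blast
    ultimately show False
      using uv convex_congruence_class_eq[OF V_convex_congruence] by (metis order_less_irrefl)
  qed
  then show ?thesis using uv sub by blast
qed

lemma no_minimal_root_separating_class:
  assumes lp: "l_perm_group G" and tr: "transitive_grp G"
    and nm: "\<forall>\<Gamma>\<in>roots G. \<exists>\<Gamma>'\<in>roots G. \<Gamma>' \<subset> \<Gamma>" and "\<Delta> \<in> roots G"
    and "\<beta> \<in> \<Delta>" "\<gamma> \<in> \<Delta>" "\<gamma> \<noteq> \<beta>" "\<delta> \<noteq> \<beta>"
  shows "\<exists>u v. u \<noteq> v \<and> V G u v `` {\<beta>} \<subseteq> \<Delta> \<and> \<gamma> \<notin> V G u v `` {\<beta>} \<and> \<delta> \<notin> V G u v `` {\<beta>}"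
proof -
  obtain u v where uv: "u \<noteq> v" "V G u v \<subseteq> V G \<beta> \<gamma>" "(\<beta>, \<gamma>) \<notin> V G u v" "(\<beta>, \<delta>) \<notin> V G u v"
  proof -
    obtain u1 v1 where 1: "u1 \<noteq> v1" "V G u1 v1 \<subseteq> V G \<beta> \<gamma>" "(\<beta>, \<gamma>) \<notin> V G u1 v1"
      using no_minimal_root_shrink[OF lp tr nm] \<open>\<gamma> \<noteq> \<beta>\<close> by metis
    obtain u2 v2 where 2: "u2 \<noteq> v2" "V G u2 v2 \<subseteq> V G \<beta> \<delta>" "(\<beta>, \<delta>) \<notin> V G u2 v2"
      using no_minimal_root_shrink[OF lp tr nm] \<open>\<delta> \<noteq> \<beta>\<close> by metis
    \<comment> \<open>if the first congruence still identifies \<open>\<beta>\<close> and \<open>\<delta>\<close>, the second one lies below it\<close>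
    show ?thesis
    proof (cases "(\<beta>, \<delta>) \<in> V G u1 v1")
      case True
      then have "V G \<beta> \<delta> \<subseteq> V G u1 v1" using V_least V_convex_congruence by blast
      then show ?thesis using that 1 2 by blast
    qed (use that 1 in blast)
  qed
  obtain p q z where pq: "\<Delta> = V G p q `` {z}" using \<open>\<Delta> \<in> roots G\<close> roots_iff by metis
  note cc = V_convex_congruence[of G p q]
  have "(z, \<beta>) \<in> V G p q" "(z, \<gamma>) \<in> V G p q" using pq \<open>\<beta> \<in> \<Delta>\<close> \<open>\<gamma> \<in> \<Delta>\<close> by auto
  then have "V G \<beta> \<gamma> \<subseteq> V G p q"
    using V_least cc convex_congruence_sym convex_congruence_trans by metis
  moreover have "\<Delta> = V G p q `` {\<beta>}"
    using pq \<open>(z, \<beta>) \<in> V G p q\<close> convex_congruence_class_eq[OF cc] by blast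
  ultimately show ?thesis using uv by blast
qed

section \<open>The commutator of a class-moving element\<close>

locale moved_class =
  fixes G :: "('a::linorder \<Rightarrow> 'a) set" and E :: "('a \<times> 'a) set" and D :: "'a set"
    and b :: 'a and h g :: "'a \<Rightarrow> 'a"
  assumes l_perm: "l_perm_group G" and congr: "convex_congruence G E"
    and D_class: "D = E``{b}"
    and h_in: "h \<in> G" and h_moves: "h ` D \<noteq> D"
    and g_in: "g \<in> G" and g_supp: "supp g \<subseteq> D" and g_moves: "g b \<noteq> b"
begin

abbreviation c where "c \<equiv> gcomm (ginv h) (gconj h g)"

lemma bij_h: "bij h" and bij_g: "bij g"
  using l_perm h_in g_in l_perm_group_bij by blast+

lemma h_inv_h [simp]: "h (inv h x) = x" and inv_h_h [simp]: "inv h (h x) = x"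
  using bij_h by (simp_all add: bij_is_surj surj_f_inv_f bij_is_inj)

lemma g_inv_g [simp]: "g (inv g x) = x" and inv_g_g [simp]: "inv g (g x) = x"
  using bij_g by (simp_all add: bij_is_surj surj_f_inv_f bij_is_inj)

lemma h_eq_iff [simp]: "h x = h y \<longleftrightarrow> x = y" and inv_h_eq_iff [simp]: "inv h x = inv h y \<longleftrightarrow> x = y"
  by (metis inv_h_h, metis h_inv_h)

lemma b_in_D: "b \<in> D"
  using D_class convex_congruence_refl[OF congr] by blast

lemma g_outside: "x \<notin> D \<Longrightarrow> g x = x"
  using g_supp by (auto simp: supp_def)

lemma inv_g_outside: "x \<notin> D \<Longrightarrow> inv g x = x"
  using g_outside by (metis inv_g_g)

lemma g_inside: "x \<in> D \<Longrightarrow> g x \<in> D"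
  using g_outside by (metis inv_g_g)

lemma inv_g_inside: "x \<in> D \<Longrightarrow> inv g x \<in> D"
  using g_outside by (metis g_inv_g)

lemma h_out: "x \<in> D \<Longrightarrow> h x \<notin> D"
proof
  assume "x \<in> D" "h x \<in> D"
  then have "E``{x} = D" "E``{h x} = D"
    using D_class convex_congruence_class_eq[OF congr] by blast+
  then show False
    using h_moves convex_congruence_image_class[OF l_perm congr h_in] by metis
qed

lemma inv_h_out: "x \<in> D \<Longrightarrow> inv h x \<notin> D"
  using h_out by (metis h_inv_h)

lemma h_h_out: "x \<in> D \<Longrightarrow> h (h x) \<notin> D"
proof
  assume "x \<in> D" "h (h x) \<in> D"
  then have "(x, h (h x)) \<in> E"
    using D_class convex_congruence_sym[OF congr] convex_congruence_trans[OF congr] by blast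
  then have "(x, h x) \<in> E"
    using convex_congruence_iterate[OF congr l_perm_group_strict_mono[OF l_perm h_in]] by blast
  then show False
    using \<open>x \<in> D\<close> D_class h_out convex_congruence_trans[OF congr] by blast
qed

lemma inv_h_inv_h_out: "x \<in> D \<Longrightarrow> inv h (inv h x) \<notin> D"
  using h_h_out by (metis h_inv_h)

lemma c_apply: "c x = g (h (inv g (inv h (g (inv h (inv g (h x)))))))"
  using gcomm_ginv_gconj_apply[OF bij_h bij_g] .

lemma c_inside: "x \<in> D \<Longrightarrow> c x = g (g x)"
  by (simp add: c_apply h_out inv_g_outside g_inside inv_h_out g_outside)

lemma c_inv_h_b: "c (inv h b) = inv h (inv g b)"
  using b_in_D
  by (simp add: c_apply inv_g_inside inv_h_out g_outside inv_h_inv_h_out inv_g_outside)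

lemma c_h_b: "c (h b) = h (inv g b)"
  using b_in_D
  by (simp add: c_apply h_h_out inv_g_outside h_out g_outside inv_g_inside)

lemma c_outside:
  assumes "(inv h b, x) \<notin> E" "(b, x) \<notin> E" "(h b, x) \<notin> E"
  shows "c x = x"
proof -
  have "h x \<notin> D"
  proof
    assume "h x \<in> D"
    then have "(inv h b, inv h (h x)) \<in> E"
      using D_class convex_congruence_apply[OF congr l_perm_group_inv_closed[OF l_perm h_in]] by blast
    then show False using assms(1) by simp
  qed
  moreover have "inv h x \<notin> D"
  proof
    assume "inv h x \<in> D"
    then have "(h b, h (inv h x)) \<in> E"
      using D_class convex_congruence_apply[OF congr h_in] by blast
    then show False using assms(3) by simp
  qed
  moreover have "x \<notin> D" using assms(2) D_class by blast
  ultimately show ?thesis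
    by (simp add: c_apply inv_g_outside g_outside)
qed

lemma c_moves: "c b \<noteq> b" "c (inv h b) \<noteq> inv h b" "c (h b) \<noteq> h b"
proof -
  have "inv g b \<noteq> b" using g_moves by (metis g_inv_g)
  moreover have "g (g b) \<noteq> b"
    using g_moves strict_mono_twice_fixed l_perm_group_strict_mono[OF l_perm g_in] by blast
  ultimately show "c b \<noteq> b" "c (inv h b) \<noteq> inv h b" "c (h b) \<noteq> h b"
    by (simp_all add: b_in_D c_inside c_inv_h_b c_h_b)
qed

lemma classes_distinct: "(inv h b, b) \<notin> E" "(b, h b) \<notin> E" "(inv h b, h b) \<notin> E"
proof -
  show "(inv h b, b) \<notin> E" "(b, h b) \<notin> E"
    using inv_h_out[OF b_in_D] h_out[OF b_in_D] D_class convex_congruence_sym[OF congr] by auto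
  show "(inv h b, h b) \<notin> E"
  proof
    assume "(inv h b, h b) \<in> E"
    then have "(h (inv h b), h (h b)) \<in> E" using convex_congruence_apply[OF congr h_in] by blast
    then show False using h_h_out[OF b_in_D] D_class by simp
  qed
qed

lemma c_neq_id: "c \<noteq> id"
  using c_moves by auto

lemma commuting_preserves_D:
  assumes fG: "f \<in> G" and comm: "f \<circ> c = c \<circ> f"
  shows "f ` D = D"
proof -
  have img: "\<exists>v\<in>{inv h b, b, h b}. (f w, v) \<in> E" if "w \<in> {inv h b, b, h b}" for w
  proof -
    have "w \<in> supp c" using that c_moves by (auto simp: supp_def)
    then have "c (f w) \<noteq> f w"
      using supp_commuting_closed[OF bij_is_inj[OF l_perm_group_bij[OF l_perm fG]] comm]
      by (simp add: supp_def)
    then show ?thesis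
      using c_outside convex_congruence_sym[OF congr] by blast
  qed
  have inv_h_mono: "strict_mono (inv h)"
    using l_perm_group_strict_mono[OF l_perm l_perm_group_inv_closed[OF l_perm h_in]] .
  have "(f b, b) \<in> E"
  proof (cases "b < h b")
    case True
    then have "inv h b < b" using inv_h_mono by (metis inv_h_h strict_monoD)
    then show ?thesis
      by (rule convex_congruence_middle_class_fixed[OF l_perm congr fG _ True classes_distinct(1,2) img])
  next
    case False
    then have "h b < b"
      using classes_distinct(2) convex_congruence_refl[OF congr] by (metis linorder_neqE)
    then have "b < inv h b" using inv_h_mono by (metis inv_h_h strict_monoD)
    moreover have "(h b, b) \<notin> E" "(b, inv h b) \<notin> E"
      using classes_distinct convex_congruence_sym[OF congr] by blast+
    moreover have "\<exists>v\<in>{h b, b, inv h b}. (f w, v) \<in> E" if "w \<in> {h b, b, inv h b}" for w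
      using img[of w] that by auto
    ultimately show ?thesis
      using convex_congruence_middle_class_fixed[OF l_perm congr fG \<open>h b < b\<close>] by blast
  qed
  have "f ` D = E``{f b}"
    using D_class convex_congruence_image_class[OF l_perm congr fG] by simp
  also have "\<dots> = D"
    using D_class \<open>(f b, b) \<in> E\<close> convex_congruence_class_eq[OF congr] by simp
  finally show ?thesis .
qed

end

lemma commutator_of_class_moving:
  assumes "l_perm_group G" and cc: "convex_congruence G E"
    and "h \<in> G" "h ` (E``{x}) \<noteq> E``{x}" "g \<in> G" "supp g \<subseteq> E``{x}" "g \<noteq> id"
  shows "gcomm (ginv h) (gconj h g) \<noteq> id"
    and "\<forall>f\<in>G. f \<circ> gcomm (ginv h) (gconj h g) = gcomm (ginv h) (gconj h g) \<circ> f
           \<longrightarrow> f ` (E``{x}) = E``{x}"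
proof -
  obtain b where "g b \<noteq> b" using \<open>g \<noteq> id\<close> by (meson eq_id_iff)
  then have "(x, b) \<in> E" using \<open>supp g \<subseteq> E``{x}\<close> by (auto simp: supp_def)
  then have "E``{x} = E``{b}" using convex_congruence_class_eq[OF cc] by blast
  then interpret moved_class G E "E``{x}" b h g
    using assms \<open>g b \<noteq> b\<close> by unfold_locales
  show "gcomm (ginv h) (gconj h g) \<noteq> id" using c_neq_id .
  show "\<forall>f\<in>G. f \<circ> gcomm (ginv h) (gconj h g) = gcomm (ginv h) (gconj h g) \<circ> f
           \<longrightarrow> f ` (E``{x}) = E``{x}"
    using commuting_preserves_D by blast
qed

lemma commutator_centralizer_fixes_root:
  assumes lp: "l_perm_group G" and "h \<in> G" and "\<Delta>' \<in> roots G" and "g \<in> rst G \<Delta>'"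
    and "h ` \<Delta>' \<noteq> \<Delta>'" and "g \<noteq> id"
  shows "gcomm (ginv h) (gconj h g) \<noteq> id \<and> X G h \<noteq> {id} \<and>
    (\<forall>f\<in>G. gcomm (gcomm (ginv h) (gconj h g)) f = id \<longrightarrow> f ` \<Delta>' = \<Delta>') \<and>
    (\<forall>f\<in>centralizer G (X G h). f ` \<Delta>' = \<Delta>')"
proof -
  let ?c = "gcomm (ginv h) (gconj h g)"
  obtain p q z where \<Delta>': "\<Delta>' = V G p q `` {z}" using \<open>\<Delta>' \<in> roots G\<close> roots_iff by metis
  have gG: "g \<in> G" and "supp g \<subseteq> \<Delta>'" using \<open>g \<in> rst G \<Delta>'\<close> by (auto simp: rst_def)
  note c = commutator_of_class_moving[OF lp V_convex_congruence \<open>h \<in> G\<close> _ gG _ \<open>g \<noteq> id\<close>]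
  have cG: "?c \<in> G" using gcomm_ginv_gconj_closed[OF lp \<open>h \<in> G\<close> gG] .
  have cX: "?c \<in> X G h" using gG by (auto simp: X_def)
  have rigid: "f ` \<Delta>' = \<Delta>'" if "f \<in> G" "f \<circ> ?c = ?c \<circ> f" for f
    using c(2) that \<open>h ` \<Delta>' \<noteq> \<Delta>'\<close> \<open>supp g \<subseteq> \<Delta>'\<close> \<Delta>' by blast
  have "f \<circ> ?c = ?c \<circ> f" if "f \<in> centralizer G (X G h)" for f
    using that cX by (auto simp: centralizer_def gm_def)
  moreover have "f \<circ> ?c = ?c \<circ> f" if "f \<in> G" "gcomm ?c f = id" for f
    using that cG lp l_perm_group_bij gcomm_eq_id_imp_commute by blast
  moreover have "?c \<noteq> id" using c(1) \<open>h ` \<Delta>' \<noteq> \<Delta>'\<close> \<open>supp g \<subseteq> \<Delta>'\<close> \<Delta>' by blast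
  ultimately show ?thesis
    using rigid cX by (auto simp: centralizer_def)
qed

lemma commutator_detects_moved_point:
  assumes lp: "l_perm_group G" and tr: "transitive_grp G" and am: "ample G"
    and nm: "\<forall>\<Gamma>\<in>roots G. \<exists>\<Gamma>'\<in>roots G. \<Gamma>' \<subset> \<Gamma>"
    and "\<Delta> \<in> roots G" and "h \<in> rst G \<Delta>" and "\<beta> \<in> supp h" and "f \<in> G" and "f \<beta> \<noteq> \<beta>"
  shows "\<exists>g\<in>rst G \<Delta>. gcomm (gcomm (ginv h) (gconj h g)) f \<noteq> id"
proof -
  have hG: "h \<in> G" and "supp h \<subseteq> \<Delta>" using \<open>h \<in> rst G \<Delta>\<close> by (auto simp: rst_def)
  have "h \<beta> \<noteq> \<beta>" using \<open>\<beta> \<in> supp h\<close> by (simp add: supp_def)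
  then have "h \<beta> \<in> supp h"
    using l_perm_group_bij[OF lp hG] by (simp add: supp_def bij_is_inj inj_eq)
  then have "\<beta> \<in> \<Delta>" "h \<beta> \<in> \<Delta>" using \<open>\<beta> \<in> supp h\<close> \<open>supp h \<subseteq> \<Delta>\<close> by blast+
  then obtain u v where uv: "u \<noteq> v" "V G u v `` {\<beta>} \<subseteq> \<Delta>"
      "h \<beta> \<notin> V G u v `` {\<beta>}" "f \<beta> \<notin> V G u v `` {\<beta>}"
    using no_minimal_root_separating_class[OF lp tr nm \<open>\<Delta> \<in> roots G\<close>]
      \<open>h \<beta> \<noteq> \<beta>\<close> \<open>f \<beta> \<noteq> \<beta>\<close> by blast
  let ?D = "V G u v `` {\<beta>}"
  have "\<beta> \<in> ?D" using convex_congruence_refl[OF V_convex_congruence] by blast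
  then have "h ` ?D \<noteq> ?D" "f ` ?D \<noteq> ?D" using uv by blast+
  obtain g where g: "g \<in> rst G ?D" "g \<noteq> id" using ample_rst_nontrivial[OF lp tr am uv(1)] by blast
  then have "gcomm (gcomm (ginv h) (gconj h g)) f \<noteq> id"
    using commutator_centralizer_fixes_root[OF lp hG _ g(1) \<open>h ` ?D \<noteq> ?D\<close> g(2)]
      \<open>f \<in> G\<close> \<open>f ` ?D \<noteq> ?D\<close> roots_iff uv(1) by blast
  moreover have "g \<in> rst G \<Delta>" using g(1) uv(2) by (auto simp: rst_def)
  ultimately show ?thesis by blast
qed

theorem lemma4p1:
  fixes G :: "('a::linorder \<Rightarrow> 'a) set" and \<Delta> :: "'a set" and h :: "'a \<Rightarrow> 'a"
  assumes "l_perm_group G" and "transitive_grp G" and "ample G"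
    and "\<forall>\<Gamma>\<in>roots G. \<exists>\<Gamma>'\<in>roots G. \<Gamma>' \<subset> \<Gamma>"
    and "\<Delta> \<in> roots G" and "h \<in> Q G \<Delta>"
  shows "(\<forall>\<Delta>'\<in>roots G. \<forall>g\<in>rst G \<Delta>'.
            \<Delta>' \<subset> \<Delta> \<and> h ` \<Delta>' \<noteq> \<Delta>' \<and> g \<noteq> id \<longrightarrow>
              gcomm (ginv h) (gconj h g) \<noteq> id \<and> X G h \<noteq> {id} \<and>
              (\<forall>f\<in>G. gcomm (gcomm (ginv h) (gconj h g)) f = id \<longrightarrow> f ` \<Delta>' = \<Delta>') \<and>
              (\<forall>f\<in>centralizer G (X G h). f ` \<Delta>' = \<Delta>'))
       \<and> (\<forall>\<beta>\<in>supp h. \<forall>f\<in>G.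
            f \<beta> = \<beta> \<or> (\<exists>g\<in>rst G \<Delta>. gcomm (gcomm (ginv h) (gconj h g)) f \<noteq> id))"
proof -
  have hR: "h \<in> rst G \<Delta>" using \<open>h \<in> Q G \<Delta>\<close> by (simp add: Q_def)
  then have hG: "h \<in> G" by (simp add: rst_def)
  show ?thesis
  proof (rule conjI; intro ballI impI)
    \<comment> \<open>part (a) does not need \<open>\<Delta>' \<subset> \<Delta>\<close>\<close>
    fix \<Delta>' g assume "\<Delta>' \<in> roots G" "g \<in> rst G \<Delta>'" "\<Delta>' \<subset> \<Delta> \<and> h ` \<Delta>' \<noteq> \<Delta>' \<and> g \<noteq> id"
    then show "gcomm (ginv h) (gconj h g) \<noteq> id \<and> X G h \<noteq> {id} \<and>
        (\<forall>f\<in>G. gcomm (gcomm (ginv h) (gconj h g)) f = id \<longrightarrow> f ` \<Delta>' = \<Delta>') \<and>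
        (\<forall>f\<in>centralizer G (X G h). f ` \<Delta>' = \<Delta>')"
      using commutator_centralizer_fixes_root[OF \<open>l_perm_group G\<close> hG] by blast
  next
    fix \<beta> f assume "\<beta> \<in> supp h" "f \<in> G"
    then show "f \<beta> = \<beta> \<or> (\<exists>g\<in>rst G \<Delta>. gcomm (gcomm (ginv h) (gconj h g)) f \<noteq> id)"
      using commutator_detects_moved_point[OF assms(1-5) hR] by blast
  qed
qed

end
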